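(* Let $X$ be a finite set, $C_X$ a facegram over $X$ with filtration $F_X=\Psi(C_X)$, and let $S$ be any collection of nonempty subsets of $X$ with $\mathbf{s}(C_X)\subset S\subset\mathbf{pow}(X)$. Then $$\mathbf{mgm}(C_X)=\Big\{\Big\{\Big[F_X(\sigma),\min_{\sigma\subsetneq\tau\in S}F_X(\tau)\Big)\ \Big|\ \sigma\in S\Big\}\Big\},$$ where empty intervals are discarded and a minimum over the empty set is $+\infty$.
   Context: $\mathbf{pow}(X)$ is the set of nonempty subsets of $X$. A facegram over $X$ is a monotone map $C_X$ from $\mathbb{R}$ to face-sets of $X$ (families of pairwise inclusion-incomparable nonempty subsets, ordered by: each face of one lies in a face of the other) which equals $\{X\}$ for large $t$ and, for some reals $a_1<\dots<a_n$, is $\emptyset$ on $(-\infty,a_1)$ and constant on each $[a_i,a_{i+1})$ ($a_{n+1}:=\infty$). $\Psi(C_X)(S):=\min\{t\mid S\text{ is contained in some face of }C_X(t)\}$. $\mathbf{s}(C_X):=\{\sigma\mid\sigma\in C_X(t)\text{ for some }t\}$. For nonempty $\sigma$, $I_\sigma:=\{t\mid\sigma\in C_X(t)\}$, and $\mathbf{mgm}(C_X)$ is the multiset of nonempty $I_\sigma$ over all nonempty $\sigma\subset X$. *)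

theory Defs
  imports Complex_Main "HOL-Library.Multiset"
begin

definition face_set :: "'a set \<Rightarrow> 'a set set \<Rightarrow> bool" where
  "face_set X A \<longleftrightarrow> (\<forall>\<sigma>\<in>A. \<sigma> \<noteq> {} \<and> \<sigma> \<subseteq> X) \<and>
     (\<forall>\<sigma>\<in>A. \<forall>\<tau>\<in>A. \<sigma> \<subseteq> \<tau> \<longrightarrow> \<sigma> = \<tau>)"

definition face_le :: "'a set set \<Rightarrow> 'a set set \<Rightarrow> bool" where
  "face_le A B \<longleftrightarrow> (\<forall>\<sigma>\<in>A. \<exists>\<tau>\<in>B. \<sigma> \<subseteq> \<tau>)"

definition facegram :: "'a set \<Rightarrow> (real \<Rightarrow> 'a set set) \<Rightarrow> bool" where
  "facegram X C \<longleftrightarrow>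
     (\<forall>t. face_set X (C t)) \<and>
     (\<forall>s t. s \<le> t \<longrightarrow> face_le (C s) (C t)) \<and>
     (\<exists>T. \<forall>t\<ge>T. C t = {X}) \<and>
     (\<exists>as::real list. as \<noteq> [] \<and> sorted_wrt (<) as \<and>
        (\<forall>t. t < hd as \<longrightarrow> C t = {}) \<and>
        (\<forall>i<length as. \<forall>t. as ! i \<le> t \<and> (Suc i < length as \<longrightarrow> t < as ! Suc i)
              \<longrightarrow> C t = C (as ! i)))"

definition Psi :: "(real \<Rightarrow> 'a set set) \<Rightarrow> 'a set \<Rightarrow> real" where
  "Psi C S = (LEAST t. \<exists>\<sigma>\<in>C t. S \<subseteq> \<sigma>)"

definition simplices :: "(real \<Rightarrow> 'a set set) \<Rightarrow> 'a set set" where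
  "simplices C = {\<sigma>. \<exists>t. \<sigma> \<in> C t}"

definition life :: "(real \<Rightarrow> 'a set set) \<Rightarrow> 'a set \<Rightarrow> real set" where
  "life C \<sigma> = {t. \<sigma> \<in> C t}"

definition mgm :: "'a set \<Rightarrow> (real \<Rightarrow> 'a set set) \<Rightarrow> real set multiset" where
  "mgm X C = image_mset (life C)
     (filter_mset (\<lambda>\<sigma>. life C \<sigma> \<noteq> {}) (mset_set (Pow X - {{}})))"

definition death_interval :: "('a set \<Rightarrow> real) \<Rightarrow> 'a set set \<Rightarrow> 'a set \<Rightarrow> real set" where
  "death_interval F S \<sigma> =
     (if {\<tau>\<in>S. \<sigma> \<subset> \<tau>} = {} then {F \<sigma>..}
      else {F \<sigma> ..< Min (F ` {\<tau>\<in>S. \<sigma> \<subset> \<tau>})})"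

end

theory Submission
  imports Defs
begin

text \<open>A face of a facegram is born when it first becomes covered by a face, and dies as soon as
  one of its proper supersets in \<open>S\<close> becomes covered, since faces are inclusion-incomparable.
  Covering is monotone in time and, the facegram being a step function, starts exactly at
  \<open>\<Psi>\<close>. Hence the life of \<open>\<sigma>\<close> is \<open>[\<Psi> \<sigma>, min {\<Psi> \<tau> | \<sigma> \<subset> \<tau> \<in> S})\<close>; and a set with nonempty
  life is a simplex, hence lies in \<open>S\<close>, so both multisets range over the same sets.\<close>

lemma step_function_breakpoint:
  fixes as :: "real list"
  assumes "sorted_wrt (<) as" "as \<noteq> []" "hd as \<le> t"
    and const: "\<And>i t. i < length as \<Longrightarrow> as ! i \<le> t \<Longrightarrow> (Suc i < length as \<Longrightarrow> t < as ! Suc i)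
        \<Longrightarrow> f t = f (as ! i)"
  obtains a where "a \<in> set as" "a \<le> t" "f t = f a"
proof -
  let ?I = "{i. i < length as \<and> as ! i \<le> t}"
  have "0 \<in> ?I" using assms(2,3) by (simp add: hd_conv_nth)
  then have "?I \<noteq> {}" by blast
  define i where "i = Max ?I"
  have i: "i < length as" "as ! i \<le> t"
    using Max_in[of ?I] \<open>?I \<noteq> {}\<close> unfolding i_def by auto
  have "t < as ! Suc i" if "Suc i < length as"
  proof (rule ccontr)
    assume "\<not> t < as ! Suc i"
    with that have "Suc i \<in> ?I" by simp
    then have "Suc i \<le> i" unfolding i_def by (simp add: Max_ge)
    then show False by simp
  qed
  with i const have "f t = f (as ! i)" by blast
  with i show thesis using that nth_mem by blast
qed

lemma facegram_face_set: "facegram X C \<Longrightarrow> face_set X (C t)"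
  by (simp add: facegram_def)

lemma facegram_face_le: "facegram X C \<Longrightarrow> s \<le> t \<Longrightarrow> face_le (C s) (C t)"
  by (simp add: facegram_def)

lemma facegram_eventually_top:
  assumes "facegram X C"
  obtains T where "\<And>t. T \<le> t \<Longrightarrow> C t = {X}"
  using assms unfolding facegram_def by auto

lemma facegram_step_function:
  assumes "facegram X C"
  obtains as :: "real list" where "as \<noteq> []" "sorted_wrt (<) as"
     "\<And>t. t < hd as \<Longrightarrow> C t = {}"
     "\<And>i t. i < length as \<Longrightarrow> as ! i \<le> t \<Longrightarrow> (Suc i < length as \<Longrightarrow> t < as ! Suc i)
        \<Longrightarrow> C t = C (as ! i)"
  using assms unfolding facegram_def by (metis (no_types))

lemma face_set_eqI: "face_set X A \<Longrightarrow> \<sigma> \<in> A \<Longrightarrow> \<tau> \<in> A \<Longrightarrow> \<sigma> \<subseteq> \<tau> \<Longrightarrow> \<sigma> = \<tau>"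
  unfolding face_set_def by blast

definition covered :: "(real \<Rightarrow> 'a set set) \<Rightarrow> 'a set \<Rightarrow> real \<Rightarrow> bool" where
  "covered C \<sigma> t \<longleftrightarrow> (\<exists>\<rho>\<in>C t. \<sigma> \<subseteq> \<rho>)"

lemma Psi_eq_Least_covered: "Psi C \<sigma> = (LEAST t. covered C \<sigma> t)"
  unfolding Psi_def covered_def ..

lemma facegram_covered_mono:
  assumes "facegram X C" "covered C \<sigma> s" "s \<le> t"
  shows "covered C \<sigma> t"
  using facegram_face_le[OF assms(1,3)] assms(2)
  unfolding covered_def face_le_def by (meson order_trans)

lemma facegram_covered_eventually:
  assumes "facegram X C" "\<sigma> \<subseteq> X"
  obtains t where "covered C \<sigma> t"
proof (rule facegram_eventually_top[OF assms(1)])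
  fix T assume "\<And>t. T \<le> t \<Longrightarrow> C t = {X}"
  with assms(2) have "covered C \<sigma> T" unfolding covered_def by simp
  then show thesis by (rule that)
qed

lemma facegram_breakpoints:
  assumes "facegram X C"
  obtains B :: "real set" where "finite B" "\<And>t. C t \<noteq> {} \<Longrightarrow> \<exists>a\<in>B. a \<le> t \<and> C t = C a"
proof -
  obtain as :: "real list" where as: "as \<noteq> []" "sorted_wrt (<) as"
     "\<And>t. t < hd as \<Longrightarrow> C t = {}"
     "\<And>i t. i < length as \<Longrightarrow> as ! i \<le> t \<Longrightarrow> (Suc i < length as \<Longrightarrow> t < as ! Suc i)
        \<Longrightarrow> C t = C (as ! i)"
    using facegram_step_function[OF assms] by blast
  have "\<exists>a\<in>set as. a \<le> t \<and> C t = C a" if "C t \<noteq> {}" for t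
  proof -
    from that as(3) have "hd as \<le> t" by force
    then obtain a where "a \<in> set as" "a \<le> t" "C t = C a"
      by (rule step_function_breakpoint[where f = C, OF as(2,1) _ as(4)])
    then show ?thesis by blast
  qed
  then show thesis by (intro that[of "set as"]) auto
qed

lemma facegram_covered_iff_Psi:
  assumes fg: "facegram X C" and "\<sigma> \<subseteq> X"
  shows "covered C \<sigma> t \<longleftrightarrow> Psi C \<sigma> \<le> t"
proof -
  obtain B where "finite B" and breakpoint: "\<And>t. C t \<noteq> {} \<Longrightarrow> \<exists>a\<in>B. a \<le> t \<and> C t = C a"
    using facegram_breakpoints[OF fg] by blast
  define A where "A = {a \<in> B. covered C \<sigma> a}"
  have covered_at_breakpoint: "\<exists>a\<in>A. a \<le> t" if "covered C \<sigma> t" for t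
  proof -
    from that have "C t \<noteq> {}" unfolding covered_def by blast
    then obtain a where "a \<in> B" "a \<le> t" "C t = C a" using breakpoint by blast
    with that show ?thesis unfolding A_def covered_def by auto
  qed
  have "finite A" using \<open>finite B\<close> unfolding A_def by simp
  obtain t0 where "covered C \<sigma> t0" using facegram_covered_eventually[OF assms] .
  then have "A \<noteq> {}" using covered_at_breakpoint by blast
  with \<open>finite A\<close> have "Min A \<in> A" by simp
  have covered_iff_Min: "covered C \<sigma> t \<longleftrightarrow> Min A \<le> t" for t
  proof
    assume "covered C \<sigma> t"
    then obtain a where "a \<in> A" "a \<le> t" using covered_at_breakpoint by blast
    with \<open>finite A\<close> show "Min A \<le> t" by (meson Min_le order_trans)
  next
    assume "Min A \<le> t"
    with \<open>Min A \<in> A\<close> show "covered C \<sigma> t"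
      using facegram_covered_mono[OF fg] unfolding A_def by blast
  qed
  then have "Psi C \<sigma> = Min A"
    unfolding Psi_eq_Least_covered by (intro Least_equality) auto
  with covered_iff_Min show ?thesis by simp
qed

lemma facegram_mem_iff_maximal_covered:
  assumes "facegram X C" "simplices C \<subseteq> S"
  shows "\<sigma> \<in> C t \<longleftrightarrow> covered C \<sigma> t \<and> \<not> (\<exists>\<rho>\<in>S. \<sigma> \<subset> \<rho> \<and> covered C \<rho> t)"
proof
  assume "\<sigma> \<in> C t"
  have "\<not> (\<exists>\<rho>\<in>S. \<sigma> \<subset> \<rho> \<and> covered C \<rho> t)"
  proof
    assume "\<exists>\<rho>\<in>S. \<sigma> \<subset> \<rho> \<and> covered C \<rho> t"
    then obtain \<rho> \<rho>' where "\<sigma> \<subset> \<rho>" "\<rho> \<subseteq> \<rho>'" "\<rho>' \<in> C t"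
      unfolding covered_def by blast
    with \<open>\<sigma> \<in> C t\<close> have "\<sigma> = \<rho>'"
      by (intro face_set_eqI[OF facegram_face_set[OF assms(1)]]) auto
    with \<open>\<sigma> \<subset> \<rho>\<close> \<open>\<rho> \<subseteq> \<rho>'\<close> show False by blast
  qed
  moreover from \<open>\<sigma> \<in> C t\<close> have "covered C \<sigma> t" unfolding covered_def by blast
  ultimately show "covered C \<sigma> t \<and> \<not> (\<exists>\<rho>\<in>S. \<sigma> \<subset> \<rho> \<and> covered C \<rho> t)" by blast
next
  assume "covered C \<sigma> t \<and> \<not> (\<exists>\<rho>\<in>S. \<sigma> \<subset> \<rho> \<and> covered C \<rho> t)"
  then have "covered C \<sigma> t" and maximal: "\<not> (\<exists>\<rho>\<in>S. \<sigma> \<subset> \<rho> \<and> covered C \<rho> t)"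
    by simp_all
  then obtain \<rho> where "\<rho> \<in> C t" "\<sigma> \<subseteq> \<rho>" unfolding covered_def by blast
  moreover from \<open>\<rho> \<in> C t\<close> have "\<rho> \<in> S" "covered C \<rho> t"
    using assms(2) unfolding simplices_def covered_def by auto
  ultimately have "\<sigma> = \<rho>" using maximal by blast
  with \<open>\<rho> \<in> C t\<close> show "\<sigma> \<in> C t" by simp
qed

lemma death_interval_eq:
  assumes "finite S"
  shows "death_interval F S \<sigma> = {t. F \<sigma> \<le> t \<and> (\<forall>\<tau>\<in>S. \<sigma> \<subset> \<tau> \<longrightarrow> t < F \<tau>)}"
proof (cases "{\<tau>\<in>S. \<sigma> \<subset> \<tau>} = {}")
  case True
  then show ?thesis unfolding death_interval_def by auto
next
  case False
  with assms have "t < Min (F ` {\<tau>\<in>S. \<sigma> \<subset> \<tau>}) \<longleftrightarrow> (\<forall>\<tau>\<in>S. \<sigma> \<subset> \<tau> \<longrightarrow> t < F \<tau>)" for t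
    by (subst Min_gr_iff) auto
  with False show ?thesis unfolding death_interval_def by auto
qed

lemma facegram_life_eq_death_interval:
  assumes "finite S" "facegram X C" "simplices C \<subseteq> S" "S \<subseteq> Pow X" "\<sigma> \<subseteq> X"
  shows "life C \<sigma> = death_interval (Psi C) S \<sigma>"
proof -
  have covered_S: "covered C \<tau> t \<longleftrightarrow> \<not> t < Psi C \<tau>" if "\<tau> \<in> S" for \<tau> t
    using facegram_covered_iff_Psi[OF assms(2), of \<tau> t] that assms(4) by auto
  have "\<sigma> \<in> C t \<longleftrightarrow> Psi C \<sigma> \<le> t \<and> (\<forall>\<tau>\<in>S. \<sigma> \<subset> \<tau> \<longrightarrow> t < Psi C \<tau>)" for t
    unfolding facegram_mem_iff_maximal_covered[OF assms(2,3)]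
      facegram_covered_iff_Psi[OF assms(2,5)]
    by (simp add: covered_S cong: bex_cong)
  then show ?thesis
    unfolding life_def death_interval_eq[OF assms(1)] by simp
qed

theorem mainTheorem12:
  fixes X :: "'a set" and C :: "real \<Rightarrow> 'a set set" and S :: "'a set set"
  assumes "finite X"
    and "facegram X C"
    and "simplices C \<subseteq> S"
    and "S \<subseteq> Pow X - {{}}"
  shows "mgm X C = image_mset (death_interval (Psi C) S)
           (filter_mset (\<lambda>\<sigma>. death_interval (Psi C) S \<sigma> \<noteq> {}) (mset_set S))"
proof -
  have "finite (Pow X - {{}})" using assms(1) by simp
  with assms(4) have "finite S" by (rule finite_subset)
  have "S \<subseteq> Pow X" using assms(4) by blast
  have life_eq: "life C \<sigma> = death_interval (Psi C) S \<sigma>" if "\<sigma> \<subseteq> X" for \<sigma>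
    by (rule facegram_life_eq_death_interval[OF \<open>finite S\<close> assms(2,3) \<open>S \<subseteq> Pow X\<close> that])
  have "\<sigma> \<in> S" if "life C \<sigma> \<noteq> {}" for \<sigma>
    using that assms(3) unfolding life_def simplices_def by blast
  then have same_support: "{\<sigma> \<in> Pow X - {{}}. life C \<sigma> \<noteq> {}}
      = {\<sigma> \<in> S. death_interval (Psi C) S \<sigma> \<noteq> {}}"
    using assms(4) life_eq by auto
  show ?thesis
    unfolding mgm_def filter_mset_mset_set[OF \<open>finite S\<close>]
      filter_mset_mset_set[OF \<open>finite (Pow X - {{}})\<close>] same_support
  proof (rule image_mset_cong)
    fix \<sigma> assume "\<sigma> \<in># mset_set {\<sigma> \<in> S. death_interval (Psi C) S \<sigma> \<noteq> {}}"
    then have "\<sigma> \<subseteq> X" using \<open>finite S\<close> assms(4) by auto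
    then show "life C \<sigma> = death_interval (Psi C) S \<sigma>" by (rule life_eq)
  qed
qed

end
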